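(* Let $q\ge1$ and let $\mathcal{T}_q=(\tau_1,\ldots,\tau_q)$ be the permutation ideal in $S_{\mathcal{T}}=K[x_\sigma:\sigma\in S_q]$. Consider the simplicial complex $\mathbb{M}_q^2$ with vertex set $\{\tau_i\tau_j:1\le i\le j\le q\}$, $\mathcal{M}=\{\tau_i\tau_j:1\le i<j\le q\}$, facets $\mathcal{M}_k=\mathcal{M}\cup\{\tau_k^2\}$ ($k\in[q]$), and for a set $A$ of vertices let $m_A$ be the lcm of its elements. Then: (i) $m_{\mathcal{M}}=\prod_{\sigma\in S_q}x_\sigma^{2q-1}$; (ii) for a face $\gamma\in\mathbb{M}_q^2$ and $\sigma\in S_q$: $x_\sigma^{2q}\mid m_\gamma$ if and only if $\tau_i^2\in\gamma$ for some $i\in[q]$ with $\sigma(i)=q$; (iii) for a face $\gamma\in\mathbb{M}_q^2$ and $\sigma\in S_q$ with $\sigma(i)=q$ and $\sigma(j)=q-1$: if $\tau_i^2\notin\gamma$, then $x_\sigma^{2q-1}\mid m_\gamma$ if and only if $\tau_i\tau_j\in\gamma$; (iv) for every $k\in[q]$, $m_{\mathcal{M}_k}=\prod_{\sigma\in S_q,\ \sigma(k)=q}x_\sigma^{2q}\prod_{\sigma\in S_q,\ \sigma(k)\neq q}x_\sigma^{2q-1}$; (v) $m_{V(\mathbb{M}_q^2)}=\prod_{\sigma\in S_q}x_\sigma^{2q}$, where $V(\mathbb{M}_q^2)$ is the vertex set.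
   Context: $S_q$ is the symmetric group on $[q]$; for $\sigma=i_1\cdots i_q$ in one-line notation, $\sigma(j)=i_j$. $K$ is a field, $\tau_i=\prod_{\sigma\in S_q}x_\sigma^{\sigma(i)}$, and $\mathcal{T}_q=(\tau_1,\ldots,\tau_q)$. The monomials $\tau_i\tau_j$ ($1\le i\le j\le q$) are pairwise distinct, so they can serve as vertex names. *)

theory Defs
  imports "HOL-Combinatorics.Permutations"
begin

text \<open>Monomials in the variables x_sigma (sigma in S_q) of S_T = K[x_sigma] are
represented by their exponent vectors: a monomial is a function from
permutations (functions nat => nat permuting {1..q}) to exponents.\<close>

type_synonym mono = "(nat \<Rightarrow> nat) \<Rightarrow> nat"

definition Sq :: "nat \<Rightarrow> (nat \<Rightarrow> nat) set" where
  "Sq q = {\<sigma>. \<sigma> permutes {1..q}}"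

text \<open>tau_i = prod over sigma in S_q of x_sigma^(sigma(i))\<close>
definition tau :: "nat \<Rightarrow> nat \<Rightarrow> mono" where
  "tau q i = (\<lambda>\<sigma>. if \<sigma> \<in> Sq q then \<sigma> i else 0)"

definition mmul :: "mono \<Rightarrow> mono \<Rightarrow> mono" where
  "mmul a b = (\<lambda>\<sigma>. a \<sigma> + b \<sigma>)"

definition xpow :: "(nat \<Rightarrow> nat) \<Rightarrow> nat \<Rightarrow> mono" where
  "xpow \<sigma> e = (\<lambda>\<rho>. if \<rho> = \<sigma> then e else 0)"

definition mprod :: "'a set \<Rightarrow> ('a \<Rightarrow> mono) \<Rightarrow> mono" where
  "mprod S f = (\<lambda>\<rho>. \<Sum>s\<in>S. f s \<rho>)"

text \<open>lcm of a finite set of monomials (lcm of the empty set is 1)\<close>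
definition mlcm :: "mono set \<Rightarrow> mono" where
  "mlcm A = (\<lambda>\<rho>. Max (insert 0 ((\<lambda>m. m \<rho>) ` A)))"

definition mdvd :: "mono \<Rightarrow> mono \<Rightarrow> bool" where
  "mdvd a b \<longleftrightarrow> (\<forall>\<rho>. a \<rho> \<le> b \<rho>)"

definition Vert :: "nat \<Rightarrow> mono set" where
  "Vert q = {mmul (tau q i) (tau q j) | i j. 1 \<le> i \<and> i \<le> j \<and> j \<le> q}"

definition Mset :: "nat \<Rightarrow> mono set" where
  "Mset q = {mmul (tau q i) (tau q j) | i j. 1 \<le> i \<and> i < j \<and> j \<le> q}"

definition facet :: "nat \<Rightarrow> nat \<Rightarrow> mono set" where
  "facet q k = insert (mmul (tau q k) (tau q k)) (Mset q)"

definition faces :: "nat \<Rightarrow> mono set set" where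
  "faces q = {\<gamma>. \<exists>k\<in>{1..q}. \<gamma> \<subseteq> facet q k}"

end

theory Submission
  imports Defs
begin

text \<open>The \<open>\<sigma>\<close>-exponent of the vertex \<open>\<tau>\<^sub>i\<tau>\<^sub>j\<close> is \<open>\<sigma>(i) + \<sigma>(j)\<close>, and lcms are pointwise
maxima of exponents. Since \<open>\<sigma>\<close> is a bijection of \<open>[q]\<close>, this exponent is at most \<open>2q\<close>,
with equality only for \<open>i = j = \<sigma>\<^sup>-\<^sup>1(q)\<close>; for \<open>i \<noteq> j\<close> it is at most \<open>2q - 1\<close>, with
equality only for \<open>{i, j} = {\<sigma>\<^sup>-\<^sup>1(q), \<sigma>\<^sup>-\<^sup>1(q - 1)}\<close>.\<close>

lemma add_distinct_le:
  fixes x y q :: nat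
  assumes "x \<le> q" "y \<le> q" "x \<noteq> y"
  shows "x + y \<le> 2*q - 1"
  using assms by linarith

lemma add_distinct_ge_cases:
  fixes x y q :: nat
  assumes "x \<le> q" "y \<le> q" "x \<noteq> y" "2*q - 1 \<le> x + y"
  shows "x = q \<and> y = q - 1 \<or> x = q - 1 \<and> y = q"
  using assms by linarith

lemma mdvd_xpow_iff: "mdvd (xpow \<sigma> e) b \<longleftrightarrow> e \<le> b \<sigma>"
  unfolding mdvd_def xpow_def by auto

lemma mprod_xpow_apply:
  "finite S \<Longrightarrow> mprod S (\<lambda>\<sigma>. xpow \<sigma> e) \<rho> = (if \<rho> \<in> S then e else 0)"
  unfolding mprod_def xpow_def by simp

lemma mlcm_apply_le_iff: "finite A \<Longrightarrow> mlcm A \<rho> \<le> n \<longleftrightarrow> (\<forall>m\<in>A. m \<rho> \<le> n)"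
  unfolding mlcm_def by simp

lemma le_mlcm_apply_iff: "finite A \<Longrightarrow> n \<le> mlcm A \<rho> \<longleftrightarrow> n = 0 \<or> (\<exists>m\<in>A. n \<le> m \<rho>)"
  unfolding mlcm_def by (auto simp: Max_ge_iff)

lemma mlcm_apply_eqI:
  assumes "finite A" "\<And>m'. m' \<in> A \<Longrightarrow> m' \<rho> \<le> n" "m \<in> A" "m \<rho> = n"
  shows "mlcm A \<rho> = n"
  using assms by (intro antisym) (auto simp: mlcm_apply_le_iff le_mlcm_apply_iff)

lemma mlcm_apply_eq_0: "finite A \<Longrightarrow> (\<And>m. m \<in> A \<Longrightarrow> m \<rho> = 0) \<Longrightarrow> mlcm A \<rho> = 0"
  by (simp add: mlcm_apply_le_iff flip: le_zero_eq)

lemma mlcm_insert_apply: "finite A \<Longrightarrow> mlcm (insert m A) \<rho> = max (m \<rho>) (mlcm A \<rho>)"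
  unfolding mlcm_def by (cases "A = {}") (simp_all add: insert_commute[of 0] max.left_commute)

lemma finite_Sq: "finite (Sq q)"
  unfolding Sq_def using finite_permutations[of "{1..q}"] by simp

lemma Sq_apply_in: "\<sigma> \<in> Sq q \<Longrightarrow> i \<in> {1..q} \<Longrightarrow> \<sigma> i \<in> {1..q}"
  unfolding Sq_def using permutes_in_image[of \<sigma> "{1..q}" i] by simp

lemma Sq_apply_eq_iff: "\<sigma> \<in> Sq q \<Longrightarrow> \<sigma> i = \<sigma> j \<longleftrightarrow> i = j"
  unfolding Sq_def using permutes_inj[of \<sigma> "{1..q}"] by (simp add: inj_eq)

lemma Sq_preimage:
  assumes "\<sigma> \<in> Sq q" "k \<in> {1..q}"
  shows "\<exists>i\<in>{1..q}. \<sigma> i = k"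
proof -
  have "k \<in> \<sigma> ` {1..q}"
    using assms permutes_image[of \<sigma> "{1..q}"] unfolding Sq_def by simp
  then show ?thesis by (auto simp del: atLeastAtMost_iff)
qed

lemma mmul_tau_apply:
  "mmul (tau q i) (tau q j) \<sigma> = (if \<sigma> \<in> Sq q then \<sigma> i + \<sigma> j else 0)"
  by (simp add: mmul_def tau_def)

lemma mmul_tau_commute: "mmul (tau q i) (tau q j) = mmul (tau q j) (tau q i)"
  by (auto simp: mmul_def)

lemma VertE:
  assumes "m \<in> Vert q"
  obtains a b where "m = mmul (tau q a) (tau q b)" "a \<in> {1..q}" "b \<in> {1..q}" "a \<le> b"
  using assms unfolding Vert_def by auto

lemma Mset_subset_Vert: "Mset q \<subseteq> Vert q"
  unfolding Mset_def Vert_def by (blast dest: less_imp_le)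

lemma facet_subset_Vert:
  assumes "k \<in> {1..q}"
  shows "facet q k \<subseteq> Vert q"
proof -
  have "mmul (tau q k) (tau q k) \<in> Vert q"
    using assms unfolding Vert_def by auto
  then show ?thesis
    unfolding facet_def using Mset_subset_Vert by blast
qed

lemma faces_subset_Vert: "\<gamma> \<in> faces q \<Longrightarrow> \<gamma> \<subseteq> Vert q"
  unfolding faces_def using facet_subset_Vert by blast

lemma finite_Vert: "finite (Vert q)"
proof -
  have "Vert q \<subseteq> (\<lambda>(i, j). mmul (tau q i) (tau q j)) ` ({1..q} \<times> {1..q})"
    unfolding Vert_def by force
  then show ?thesis
    by (rule finite_subset) simp
qed

lemma finite_Mset: "finite (Mset q)"
  using Mset_subset_Vert finite_Vert by (rule finite_subset)

lemma finite_face: "\<gamma> \<in> faces q \<Longrightarrow> finite \<gamma>"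
  using faces_subset_Vert finite_Vert by (rule finite_subset)

lemma Vert_apply_notin_Sq: "m \<in> Vert q \<Longrightarrow> \<sigma> \<notin> Sq q \<Longrightarrow> m \<sigma> = 0"
  by (auto elim: VertE simp: mmul_tau_apply)

lemma mlcm_apply_notin_Sq:
  assumes "A \<subseteq> Vert q" "\<rho> \<notin> Sq q"
  shows "mlcm A \<rho> = 0"
proof (rule mlcm_apply_eq_0)
  show "finite A"
    using assms(1) finite_Vert by (rule finite_subset)
  show "m \<rho> = 0" if "m \<in> A" for m
    using subsetD[OF assms(1) that] assms(2) by (rule Vert_apply_notin_Sq)
qed

lemma Vert_apply_le:
  assumes "m \<in> Vert q"
  shows "m \<sigma> \<le> 2*q"
proof -
  obtain a b where m: "m = mmul (tau q a) (tau q b)" and ab: "a \<in> {1..q}" "b \<in> {1..q}"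
    using assms by (rule VertE)
  have "\<sigma> a \<le> q \<and> \<sigma> b \<le> q" if "\<sigma> \<in> Sq q"
    using Sq_apply_in[OF that] ab by auto
  then show ?thesis by (auto simp: m mmul_tau_apply)
qed

lemma Mset_apply_le:
  assumes "m \<in> Mset q"
  shows "m \<sigma> \<le> 2*q - 1"
proof -
  obtain a b where m: "m = mmul (tau q a) (tau q b)" and ab: "a \<in> {1..q}" "b \<in> {1..q}" "a < b"
    using assms unfolding Mset_def by auto
  show ?thesis
  proof (cases "\<sigma> \<in> Sq q")
    case True
    then have "\<sigma> a \<le> q" "\<sigma> b \<le> q" "\<sigma> a \<noteq> \<sigma> b"
      using ab Sq_apply_in Sq_apply_eq_iff by fastforce+
    then show ?thesis using True m by (simp add: mmul_tau_apply add_distinct_le)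
  qed (simp add: m mmul_tau_apply)
qed

lemma mmul_tau_in_Mset:
  assumes "i \<in> {1..q}" "j \<in> {1..q}" "i \<noteq> j"
  shows "mmul (tau q i) (tau q j) \<in> Mset q"
proof (cases "i < j")
  case True
  then show ?thesis using assms unfolding Mset_def by auto
next
  case False
  with assms(3) have "j < i" by simp
  with assms(1,2) have "mmul (tau q j) (tau q i) \<in> Mset q"
    unfolding Mset_def by auto
  then show ?thesis by (simp add: mmul_tau_commute)
qed

lemma Vert_apply_ge_2q_iff:
  assumes "\<sigma> \<in> Sq q" "m \<in> Vert q"
  shows "2*q \<le> m \<sigma> \<longleftrightarrow> (\<exists>i\<in>{1..q}. m = mmul (tau q i) (tau q i) \<and> \<sigma> i = q)"
proof
  obtain a b where m: "m = mmul (tau q a) (tau q b)" and ab: "a \<in> {1..q}" "b \<in> {1..q}"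
    using assms(2) by (rule VertE)
  have \<sigma>ab: "\<sigma> a \<in> {1..q}" "\<sigma> b \<in> {1..q}"
    using Sq_apply_in[OF assms(1)] ab by blast+
  assume "2*q \<le> m \<sigma>"
  then have ge: "2*q \<le> \<sigma> a + \<sigma> b"
    using assms(1) m by (simp add: mmul_tau_apply)
  have "a = b"
  proof (rule ccontr)
    assume "a \<noteq> b"
    then have "\<sigma> a + \<sigma> b \<le> 2*q - 1"
      using \<sigma>ab assms(1) by (intro add_distinct_le) (simp_all add: Sq_apply_eq_iff)
    with ge \<sigma>ab show False by simp
  qed
  then show "\<exists>i\<in>{1..q}. m = mmul (tau q i) (tau q i) \<and> \<sigma> i = q"
    using ab \<sigma>ab ge m by auto
next
  assume "\<exists>i\<in>{1..q}. m = mmul (tau q i) (tau q i) \<and> \<sigma> i = q"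
  then show "2*q \<le> m \<sigma>"
    using assms(1) by (auto simp: mmul_tau_apply)
qed

lemma Vert_apply_ge_2q_minus_1_iff:
  assumes \<sigma>: "\<sigma> \<in> Sq q" and ij: "i \<in> {1..q}" "j \<in> {1..q}" "\<sigma> i = q" "\<sigma> j = q - 1"
    and m: "m \<in> Vert q" "m \<noteq> mmul (tau q i) (tau q i)"
  shows "2*q - 1 \<le> m \<sigma> \<longleftrightarrow> m = mmul (tau q i) (tau q j)"
proof
  obtain a b where m_ab: "m = mmul (tau q a) (tau q b)" and ab: "a \<in> {1..q}" "b \<in> {1..q}"
    using m(1) by (rule VertE)
  have \<sigma>ab: "\<sigma> a \<in> {1..q}" "\<sigma> b \<in> {1..q}"
    using Sq_apply_in[OF \<sigma>] ab by blast+
  assume "2*q - 1 \<le> m \<sigma>"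
  then have ge: "2*q - 1 \<le> \<sigma> a + \<sigma> b"
    using \<sigma> m_ab by (simp add: mmul_tau_apply)
  show "m = mmul (tau q i) (tau q j)"
  proof (cases "a = b")
    case True
    then have "\<sigma> a = q" using ge \<sigma>ab by auto
    then have "a = i"
      using Sq_apply_eq_iff[OF \<sigma>, of a i] ij by simp
    with True m m_ab show ?thesis by simp
  next
    case False
    then have "\<sigma> a = q \<and> \<sigma> b = q - 1 \<or> \<sigma> a = q - 1 \<and> \<sigma> b = q"
      using \<sigma> \<sigma>ab ge by (intro add_distinct_ge_cases) (simp_all add: Sq_apply_eq_iff)
    then have "\<sigma> a = \<sigma> i \<and> \<sigma> b = \<sigma> j \<or> \<sigma> a = \<sigma> j \<and> \<sigma> b = \<sigma> i"
      using ij by simp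
    then have "a = i \<and> b = j \<or> a = j \<and> b = i"
      by (simp add: Sq_apply_eq_iff[OF \<sigma>])
    then show ?thesis using m_ab mmul_tau_commute by metis
  qed
next
  assume "m = mmul (tau q i) (tau q j)"
  then show "2*q - 1 \<le> m \<sigma>"
    using \<sigma> ij by (simp add: mmul_tau_apply)
qed

lemma mlcm_Vert_apply:
  assumes "q \<ge> 1"
  shows "mlcm (Vert q) \<rho> = (if \<rho> \<in> Sq q then 2*q else 0)"
proof (cases "\<rho> \<in> Sq q")
  case True
  have "q \<in> {1..q}" using assms by simp
  then obtain i where i: "i \<in> {1..q}" "\<rho> i = q"
    using Sq_preimage[OF True] by blast
  have "mmul (tau q i) (tau q i) \<in> Vert q"
    using i(1) unfolding Vert_def by auto
  moreover have "mmul (tau q i) (tau q i) \<rho> = 2*q"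
    using True i by (simp add: mmul_tau_apply)
  ultimately have "mlcm (Vert q) \<rho> = 2*q"
    using Vert_apply_le by (blast intro: mlcm_apply_eqI[OF finite_Vert])
  with True show ?thesis by simp
qed (simp add: mlcm_apply_notin_Sq[OF subset_refl])

lemma mlcm_Mset_apply:
  assumes "q \<ge> 2"
  shows "mlcm (Mset q) \<rho> = (if \<rho> \<in> Sq q then 2*q - 1 else 0)"
proof (cases "\<rho> \<in> Sq q")
  case True
  have "q \<in> {1..q}" "q - 1 \<in> {1..q}"
    using assms by auto
  then obtain i j where ij: "i \<in> {1..q}" "\<rho> i = q" "j \<in> {1..q}" "\<rho> j = q - 1"
    using Sq_preimage[OF True] by meson
  then have "mmul (tau q i) (tau q j) \<in> Mset q"
    using assms by (intro mmul_tau_in_Mset) auto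
  moreover have "mmul (tau q i) (tau q j) \<rho> = 2*q - 1"
    using True ij assms by (simp add: mmul_tau_apply)
  ultimately have "mlcm (Mset q) \<rho> = 2*q - 1"
    using Mset_apply_le by (blast intro: mlcm_apply_eqI[OF finite_Mset])
  with True show ?thesis by simp
qed (simp add: mlcm_apply_notin_Sq[OF Mset_subset_Vert])

lemma mlcm_facet_apply:
  assumes k: "k \<in> {1..q}"
  shows "mlcm (facet q k) \<rho> = (if \<rho> \<in> Sq q then if \<rho> k = q then 2*q else 2*q - 1 else 0)"
proof (cases "\<rho> \<in> Sq q")
  case True
  have facet: "mlcm (facet q k) \<rho> = max (2 * \<rho> k) (mlcm (Mset q) \<rho>)"
    unfolding facet_def using True by (simp add: mlcm_insert_apply finite_Mset mmul_tau_apply)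
  have \<rho>k: "\<rho> k \<in> {1..q}"
    using True k by (rule Sq_apply_in)
  show ?thesis
  proof (cases "\<rho> k = q")
    case True
    have "mlcm (Mset q) \<rho> \<le> 2*q - 1"
      using Mset_apply_le by (simp add: mlcm_apply_le_iff finite_Mset)
    with True \<open>\<rho> \<in> Sq q\<close> show ?thesis by (simp add: facet)
  next
    case False
    then have "q \<ge> 2" "2 * \<rho> k \<le> 2*q - 1"
      using \<rho>k by auto
    with False \<open>\<rho> \<in> Sq q\<close> show ?thesis by (simp add: facet mlcm_Mset_apply)
  qed
qed (simp add: mlcm_apply_notin_Sq[OF facet_subset_Vert[OF k]])

lemma xpow_2q_dvd_mlcm_face_iff:
  assumes "\<gamma> \<in> faces q" "\<sigma> \<in> Sq q"
  shows "mdvd (xpow \<sigma> (2*q)) (mlcm \<gamma>) \<longleftrightarrow>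
    (\<exists>i\<in>{1..q}. mmul (tau q i) (tau q i) \<in> \<gamma> \<and> \<sigma> i = q)"
proof -
  have "q \<ge> 1"
    using assms(1) unfolding faces_def by auto
  then have "mdvd (xpow \<sigma> (2*q)) (mlcm \<gamma>) \<longleftrightarrow> (\<exists>m\<in>\<gamma>. 2*q \<le> m \<sigma>)"
    using finite_face[OF assms(1)] by (simp add: mdvd_xpow_iff le_mlcm_apply_iff)
  also have "\<dots> \<longleftrightarrow> (\<exists>i\<in>{1..q}. mmul (tau q i) (tau q i) \<in> \<gamma> \<and> \<sigma> i = q)"
    using faces_subset_Vert[OF assms(1)] Vert_apply_ge_2q_iff[OF assms(2)] by blast
  finally show ?thesis .
qed

lemma xpow_2q_minus_1_dvd_mlcm_face_iff:
  assumes "\<gamma> \<in> faces q" "\<sigma> \<in> Sq q" "i \<in> {1..q}" "j \<in> {1..q}" "\<sigma> i = q" "\<sigma> j = q - 1"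
    and "mmul (tau q i) (tau q i) \<notin> \<gamma>"
  shows "mdvd (xpow \<sigma> (2*q - 1)) (mlcm \<gamma>) \<longleftrightarrow> mmul (tau q i) (tau q j) \<in> \<gamma>"
proof -
  have "mdvd (xpow \<sigma> (2*q - 1)) (mlcm \<gamma>) \<longleftrightarrow> (\<exists>m\<in>\<gamma>. 2*q - 1 \<le> m \<sigma>)"
    using finite_face[OF assms(1)] assms(3) by (simp add: mdvd_xpow_iff le_mlcm_apply_iff)
  also have "\<dots> \<longleftrightarrow> mmul (tau q i) (tau q j) \<in> \<gamma>"
  proof -
    have "2*q - 1 \<le> m \<sigma> \<longleftrightarrow> m = mmul (tau q i) (tau q j)" if "m \<in> \<gamma>" for m
      using that assms(7) faces_subset_Vert[OF assms(1)]
      by (intro Vert_apply_ge_2q_minus_1_iff[OF assms(2-6)]) auto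
    then show ?thesis by blast
  qed
  finally show ?thesis .
qed

theorem lemma4p6:
  fixes q :: nat
  assumes "q \<ge> 1"
  shows
    "(q \<ge> 2 \<longrightarrow> mlcm (Mset q) = mprod (Sq q) (\<lambda>\<sigma>. xpow \<sigma> (2*q - 1)))
   \<and> (\<forall>\<gamma>\<in>faces q. \<forall>\<sigma>\<in>Sq q.
        mdvd (xpow \<sigma> (2*q)) (mlcm \<gamma>) \<longleftrightarrow>
        (\<exists>i\<in>{1..q}. mmul (tau q i) (tau q i) \<in> \<gamma> \<and> \<sigma> i = q))
   \<and> (\<forall>\<gamma>\<in>faces q. \<forall>\<sigma>\<in>Sq q. \<forall>i\<in>{1..q}. \<forall>j\<in>{1..q}.
        \<sigma> i = q \<longrightarrow> \<sigma> j = q - 1 \<longrightarrow> mmul (tau q i) (tau q i) \<notin> \<gamma> \<longrightarrow>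
        (mdvd (xpow \<sigma> (2*q - 1)) (mlcm \<gamma>) \<longleftrightarrow> mmul (tau q i) (tau q j) \<in> \<gamma>))
   \<and> (\<forall>k\<in>{1..q}. mlcm (facet q k) =
        mmul (mprod {\<sigma>\<in>Sq q. \<sigma> k = q} (\<lambda>\<sigma>. xpow \<sigma> (2*q)))
             (mprod {\<sigma>\<in>Sq q. \<sigma> k \<noteq> q} (\<lambda>\<sigma>. xpow \<sigma> (2*q - 1))))
   \<and> mlcm (Vert q) = mprod (Sq q) (\<lambda>\<sigma>. xpow \<sigma> (2*q))"
proof (intro conjI impI ballI)
  show "mlcm (Mset q) = mprod (Sq q) (\<lambda>\<sigma>. xpow \<sigma> (2*q - 1))" if "q \<ge> 2"
    using that by (simp add: fun_eq_iff mlcm_Mset_apply mprod_xpow_apply finite_Sq)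
  show "mlcm (facet q k) =
      mmul (mprod {\<sigma>\<in>Sq q. \<sigma> k = q} (\<lambda>\<sigma>. xpow \<sigma> (2*q)))
           (mprod {\<sigma>\<in>Sq q. \<sigma> k \<noteq> q} (\<lambda>\<sigma>. xpow \<sigma> (2*q - 1)))" if "k \<in> {1..q}" for k
    using that by (simp add: fun_eq_iff mlcm_facet_apply mmul_def mprod_xpow_apply finite_Sq)
  show "mlcm (Vert q) = mprod (Sq q) (\<lambda>\<sigma>. xpow \<sigma> (2*q))"
    using assms by (simp add: fun_eq_iff mlcm_Vert_apply mprod_xpow_apply finite_Sq)
qed (rule xpow_2q_dvd_mlcm_face_iff xpow_2q_minus_1_dvd_mlcm_face_iff; assumption)+

end
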